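(* Consider the parallel multiple access channel power allocation game with $K$ users and $A$ nodes, as described in the context, with random channel gains. If $p\in\Delta$ is a Nash equilibrium, then almost surely $p$ lies in the relative interior of a face of the polytope $\Delta$ of dimension at most $A-1$.
   Context: Setting: users $\mathcal{K}=\{1,\dots,K\}$, nodes $\mathcal{A}=\{1,\dots,A\}$. User $k$ has maximum power $P_k>0$ and strategy set $\Delta_k=\{p_k\in\mathbb{R}^{\mathcal{A}}: p_{k\alpha}\ge 0,\ \sum_\alpha p_{k\alpha}=P_k\}$ (a scaled simplex); $\Delta=\prod_k\Delta_k\subset\mathbb{R}^{KA}$. Payoffs: $u_k(p)=\sum_{\alpha} b_\alpha\log\bigl(1+\frac{g_{k\alpha}p_{k\alpha}}{\sigma_\alpha^2+\sum_{\ell\neq k}g_{\ell\alpha}p_{\ell\alpha}}\bigr)$ with constants $b_\alpha>0$, $\sigma_\alpha^2>0$ and random channel gains $g_{k\alpha}>0$ drawn from a continuous (nonatomic) probability distribution on the positive reals; "almost surely" refers to their law. $q\in\Delta$ is a Nash equilibrium if $u_k(q)\ge u_k(q_{-k};q_k')$ for all $k$ and all $q_k'\in\Delta_k$. *)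

theory Defs
  imports "HOL-Probability.Probability"
begin

text \<open>Users are indexed by a finite type 'k, nodes by a finite type 'a.
  A power profile is a vector p in real^('k * 'a), with p $ (k, alpha) the power of user k on node alpha.\<close>

definition strategy_set :: "('k::finite \<Rightarrow> real) \<Rightarrow> 'k \<Rightarrow> ('a::finite \<Rightarrow> real) set" where
  "strategy_set P k = {q. (\<forall>\<alpha>. q \<alpha> \<ge> 0) \<and> (\<Sum>\<alpha>\<in>UNIV. q \<alpha>) = P k}"

definition profiles :: "('k::finite \<Rightarrow> real) \<Rightarrow> (real, 'k \<times> 'a::finite) vec set" where
  "profiles P = {p. (\<forall>k \<alpha>. p $ (k, \<alpha>) \<ge> 0) \<and> (\<forall>k. (\<Sum>\<alpha>\<in>UNIV. p $ (k, \<alpha>)) = P k)}"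

definition payoff ::
  "('a::finite \<Rightarrow> real) \<Rightarrow> ('a \<Rightarrow> real) \<Rightarrow> ('k::finite \<times> 'a \<Rightarrow> real) \<Rightarrow> 'k \<Rightarrow> (real, 'k \<times> 'a) vec \<Rightarrow> real" where
  "payoff b \<sigma>2 g k p =
     (\<Sum>\<alpha>\<in>UNIV. b \<alpha> * ln (1 + g (k, \<alpha>) * p $ (k, \<alpha>) /
        (\<sigma>2 \<alpha> + (\<Sum>l\<in>UNIV - {k}. g (l, \<alpha>) * p $ (l, \<alpha>)))))"

definition deviate :: "(real, 'k::finite \<times> 'a::finite) vec \<Rightarrow> 'k \<Rightarrow> ('a \<Rightarrow> real) \<Rightarrow> (real, 'k \<times> 'a) vec" where
  "deviate p k q = (\<chi> i. if fst i = k then q (snd i) else p $ i)"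

definition nash_equilibrium ::
  "('k::finite \<Rightarrow> real) \<Rightarrow> ('a::finite \<Rightarrow> real) \<Rightarrow> ('a \<Rightarrow> real) \<Rightarrow> ('k \<times> 'a \<Rightarrow> real) \<Rightarrow> (real, 'k \<times> 'a) vec \<Rightarrow> bool" where
  "nash_equilibrium P b \<sigma>2 g q \<longleftrightarrow> q \<in> profiles P \<and>
     (\<forall>k. \<forall>q' \<in> strategy_set P k. payoff b \<sigma>2 g k q \<ge> payoff b \<sigma>2 g k (deviate q k q'))"

end

theory Submission
  imports Defs
begin

text \<open>At a Nash equilibrium each user puts power only on nodes maximising its marginal rate
  b(\<alpha>) g(k,\<alpha>) / W(\<alpha>), W(\<alpha>) being noise plus total received power at \<alpha>. Hence on the support of
  the equilibrium the log-gains split as ln g(k,\<alpha>) = x(\<alpha>) + y(k). These vectors span at most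
  A + K - 1 dimensions plus one per coordinate off the support, so a support of size at least
  A + K forces ln g onto a fixed hyperplane, a null event for independent nonatomic gains.
  Almost surely the support is therefore smaller than A + K, and the face of \<Delta> cut out by the
  support, which has dimension (support size) - K, meets the bound A - 1.\<close>

section \<open>Faces of the profile polytope\<close>

lemma convex_profiles: "convex (profiles P)"
  unfolding convex_def profiles_def
  by (auto simp: sum.distrib sum_distrib_left[symmetric] distrib_right[symmetric])

lemma profiles_row_pos:
  fixes p :: "(real, 'k::finite \<times> 'a::finite) vec"
  assumes "p \<in> profiles P" "P k > 0"
  shows "\<exists>\<alpha>. p $ (k, \<alpha>) > 0"
proof (rule ccontr)
  assume "\<not> ?thesis"
  then have "\<forall>\<alpha>. p $ (k, \<alpha>) = 0"
    using assms(1) unfolding profiles_def by (auto simp: not_less order.antisym)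
  then have "(\<Sum>\<alpha>\<in>UNIV. p $ (k, \<alpha>)) = 0" by simp
  then show False using assms unfolding profiles_def by auto
qed

definition support_face :: "('k::finite \<Rightarrow> real) \<Rightarrow> (real, 'k \<times> 'a::finite) vec \<Rightarrow> (real, 'k \<times> 'a) vec set"
  where "support_face P p = {q \<in> profiles P. \<forall>i. p $ i = 0 \<longrightarrow> q $ i = 0}"

lemma support_face_face_of:
  fixes p :: "(real, 'k::finite \<times> 'a::finite) vec"
  shows "support_face P p face_of profiles P"
proof -
  define a :: "(real, 'k \<times> 'a) vec" where "a = (\<chi> i. if p $ i = 0 then -1 else 0)"
  have a_nonpos: "a \<bullet> q \<le> 0" if "q \<in> profiles P" for q
    using that unfolding inner_vec_def a_def profiles_def by (intro sum_nonpos) auto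
  have "a \<bullet> q = 0 \<longleftrightarrow> (\<forall>i. p $ i = 0 \<longrightarrow> q $ i = 0)" if "q \<in> profiles P" for q
  proof -
    have q_nonneg: "\<And>i. q $ i \<ge> 0" using that unfolding profiles_def by auto
    have "a \<bullet> q = (\<Sum>i\<in>UNIV. - (if p $ i = 0 then q $ i else 0))"
      unfolding inner_vec_def a_def by (rule sum.cong) auto
    then have "a \<bullet> q = - (\<Sum>i\<in>UNIV. if p $ i = 0 then q $ i else 0)" by (simp add: sum_negf)
    moreover have "(\<Sum>i\<in>UNIV. if p $ i = 0 then q $ i else 0) = 0 \<longleftrightarrow>
        (\<forall>i. (if p $ i = 0 then q $ i else 0) = 0)"
      by (subst sum_nonneg_eq_0_iff) (auto simp: q_nonneg)
    ultimately show ?thesis by (auto split: if_splits)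
  qed
  then have "support_face P p = profiles P \<inter> {x. a \<bullet> x = 0}"
    unfolding support_face_def by auto
  then show ?thesis
    using a_nonpos by (simp add: face_of_Int_supporting_hyperplane_le convex_profiles)
qed

lemma mem_rel_interior_support_face:
  fixes p :: "(real, 'k::finite \<times> 'a::finite) vec"
  assumes "p \<in> profiles P"
  shows "p \<in> rel_interior (support_face P p)"
  unfolding mem_rel_interior_ball
proof
  let ?F = "support_face P p"
  show "p \<in> ?F" using assms unfolding support_face_def by auto
  define L where "L = {q :: (real, 'k \<times> 'a) vec.
    (\<forall>k. (\<Sum>\<alpha>\<in>UNIV. q $ (k, \<alpha>)) = P k) \<and> (\<forall>i. p $ i = 0 \<longrightarrow> q $ i = 0)}"
  have "affine L"
    unfolding affine_def L_def
    by (auto simp: sum.distrib sum_distrib_left[symmetric] distrib_right[symmetric])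
  have hull_L: "affine hull ?F \<subseteq> L"
  proof (rule hull_minimal)
    show "?F \<subseteq> L" by (auto simp: L_def support_face_def profiles_def)
  qed fact
  define e where "e = Min (insert 1 ((\<lambda>i. p $ i) ` {i. p $ i > 0}))"
  have "ball p e \<inter> affine hull ?F \<subseteq> ?F"
  proof
    fix q assume q: "q \<in> ball p e \<inter> affine hull ?F"
    then have qL: "q \<in> L" using hull_L by auto
    have "q $ i \<ge> 0" for i
    proof (cases "p $ i > 0")
      case True
      have "e \<le> p $ i" unfolding e_def using True by (intro Min_le) auto
      moreover have "\<bar>(q - p) $ i\<bar> < e"
        using component_le_norm_cart[of "q - p" i] q by (simp add: dist_norm norm_minus_commute)
      ultimately show ?thesis by auto
    next
      case False
      moreover have "p $ i \<ge> 0" using assms unfolding profiles_def by (cases i) simp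
      ultimately have "p $ i = 0" by simp
      then show ?thesis using qL unfolding L_def by (cases i) auto
    qed
    then show "q \<in> ?F" using qL unfolding support_face_def L_def profiles_def by auto
  qed
  moreover have "e > 0" unfolding e_def by (simp add: Min_gr_iff)
  ultimately show "\<exists>e>0. ball p e \<inter> affine hull ?F \<subseteq> ?F" by blast
qed

text \<open>Each row sum constraint removes one degree of freedom: the coordinates in S other than one
  chosen position per row determine a vector of the subspace.\<close>

lemma dim_zero_row_sums_le:
  fixes S :: "('k::finite \<times> 'a::finite) set"
  assumes rows: "\<And>k. \<exists>\<alpha>. (k, \<alpha>) \<in> S"
  shows "dim {v :: (real, 'k \<times> 'a) vec. (\<forall>k. (\<Sum>\<alpha>\<in>UNIV. v $ (k, \<alpha>)) = 0) \<and> (\<forall>i. i \<notin> S \<longrightarrow> v $ i = 0)}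
           + CARD('k) \<le> card S"
    (is "dim ?V + _ \<le> _")
proof -
  define pivot where "pivot k = (SOME \<alpha>. (k, \<alpha>) \<in> S)" for k
  have pivot: "(k, pivot k) \<in> S" for k unfolding pivot_def by (rule someI_ex) (rule rows)
  define I where "I = S - range (\<lambda>k. (k, pivot k))"
  have pivots: "range (\<lambda>k. (k, pivot k)) \<subseteq> S" using pivot by auto
  have "card (range (\<lambda>k. (k, pivot k))) = CARD('k)"
    by (subst card_image) (auto intro: inj_onI)
  then have card_I: "card I + CARD('k) = card S"
    unfolding I_def using card_Diff_subset[OF _ pivots] card_mono[OF _ pivots] by simp
  define f :: "(real, 'k \<times> 'a) vec \<Rightarrow> (real, 'k \<times> 'a) vec"
    where "f v = (\<chi> i. if i \<in> I then v $ i else 0)" for v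
  have "subspace ?V" unfolding subspace_def by (auto simp: sum.distrib sum_distrib_left[symmetric])
  have "inj_on f ?V"
  proof (rule inj_onI)
    fix v w assume v: "v \<in> ?V" and w: "w \<in> ?V" and fvw: "f v = f w"
    define u where "u = v - w"
    have uV: "u \<in> ?V" unfolding u_def by (rule subspace_diff[OF \<open>subspace ?V\<close> v w])
    have off_pivot: "u $ (k, \<alpha>) = 0" if "\<alpha> \<noteq> pivot k" for k \<alpha>
    proof (cases "(k, \<alpha>) \<in> S")
      case True
      then have "(k, \<alpha>) \<in> I" using that unfolding I_def by auto
      then show ?thesis using arg_cong[OF fvw, of "\<lambda>x. x $ (k, \<alpha>)"] by (simp add: f_def u_def)
    qed (use uV in auto)
    have "u $ (k, pivot k) = (\<Sum>\<beta>\<in>UNIV. u $ (k, \<beta>))" for k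
      by (subst sum.remove[of _ "pivot k"]) (auto simp: off_pivot)
    then have "u $ (k, \<alpha>) = 0" for k \<alpha> using uV off_pivot by (cases "\<alpha> = pivot k") auto
    then show "v = w" unfolding u_def by (simp add: vec_eq_iff)
  qed
  have "linear f" unfolding f_def by (intro linearI) (auto simp: vec_eq_iff)
  have "span ?V = ?V" using \<open>subspace ?V\<close> by (rule span_eq_iff[THEN iffD2])
  then have "dim ?V = dim (f ` ?V)"
    using dim_image_eq[OF \<open>linear f\<close>, of ?V] \<open>inj_on f ?V\<close> by (simp only:)
  also have "\<dots> \<le> dim {x :: (real, 'k \<times> 'a) vec. \<forall>i. i \<notin> I \<longrightarrow> x $ i = 0}"
    by (rule dim_subset) (auto simp: f_def)
  also have "\<dots> = card I" by (simp only: dim_vec_eq[symmetric] dim_substandard_cart)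
  finally show ?thesis using card_I by simp
qed

lemma aff_dim_support_face_le:
  fixes p :: "(real, 'k::finite \<times> 'a::finite) vec"
  assumes pP: "p \<in> profiles P" and P_pos: "\<And>k. P k > 0"
  shows "aff_dim (support_face P p) \<le> int (card {i. p $ i > 0}) - int CARD('k)"
proof -
  let ?F = "support_face P p" and ?S = "{i. p $ i > 0}"
  let ?V = "{v :: (real, 'k \<times> 'a) vec. (\<forall>k. (\<Sum>\<alpha>\<in>UNIV. v $ (k, \<alpha>)) = 0) \<and> (\<forall>i. i \<notin> ?S \<longrightarrow> v $ i = 0)}"
  have p_nonneg: "\<And>i. p $ i \<ge> 0" using pP unfolding profiles_def by auto
  have "p \<in> ?F" using pP unfolding support_face_def by auto
  then have "aff_dim ?F = int (dim ((+) (- p) ` ?F))" by (intro aff_dim_eq_dim hull_inc)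
  moreover have "dim ((+) (- p) ` ?F) \<le> dim ?V"
  proof (rule dim_subset, rule image_subsetI)
    fix q assume "q \<in> ?F"
    then show "- p + q \<in> ?V"
      using pP p_nonneg unfolding support_face_def profiles_def
      by (auto simp: sum_subtractf not_less order.antisym)
  qed
  moreover have "dim ?V + CARD('k) \<le> card ?S"
    using profiles_row_pos[OF pP P_pos] by (intro dim_zero_row_sums_le) auto
  ultimately show ?thesis by linarith
qed

section \<open>Separable vectors on a large support\<close>

definition separable_on :: "('k::finite \<times> 'a::finite) set \<Rightarrow> (real, 'k \<times> 'a) vec \<Rightarrow> bool"
  where "separable_on E c \<longleftrightarrow> (\<exists>x y. \<forall>i\<in>E. c $ i = x (snd i) + y (fst i))"

text \<open>The vectors separable on E lie in the span of A node indicators, K - 1 user indicators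
  and the unit vectors off E; this is fewer than A K vectors when card E \<ge> A + K.\<close>

lemma exists_orthogonal_separable_on:
  fixes E :: "('k::finite \<times> 'a::finite) set"
  assumes card_E: "card E \<ge> CARD('a) + CARD('k)"
  shows "\<exists>h :: (real, 'k \<times> 'a) vec. h \<noteq> 0 \<and> (\<forall>c. separable_on E c \<longrightarrow> h \<bullet> c = 0)"
proof -
  obtain k0 :: 'k where True by simp
  define node :: "'a \<Rightarrow> (real, 'k \<times> 'a) vec" where "node \<alpha> = (\<chi> i. if snd i = \<alpha> then 1 else 0)" for \<alpha>
  define user :: "'k \<Rightarrow> (real, 'k \<times> 'a) vec" where "user k = (\<chi> i. if fst i = k then 1 else 0)" for k
  define S where "S = range node \<union> user ` (UNIV - {k0}) \<union> (\<lambda>i. axis i 1) ` (UNIV - E)"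
  have "card S \<le> card (range node) + card (user ` (UNIV - {k0})) + card ((\<lambda>i. axis i (1::real)) ` (UNIV - E))"
    unfolding S_def by (meson card_Un_le add_le_mono order_trans order_refl)
  also have "\<dots> \<le> CARD('a) + (CARD('k) - 1) + (CARD('k \<times> 'a) - card E)"
    by (intro add_mono card_image_le[THEN order_trans])
      (auto simp: card_Diff_subset)
  also have "\<dots> < CARD('k \<times> 'a)"
  proof -
    have "card E \<le> CARD('k \<times> 'a)" by (rule card_mono) auto
    moreover have "CARD('k) \<ge> 1" by (simp add: Suc_le_eq)
    ultimately show ?thesis using card_E by linarith
  qed
  finally have "dim S < DIM((real, 'k \<times> 'a) vec)"
    using dim_le_card[OF span_superset, of S] by (simp add: S_def)
  then obtain h :: "(real, 'k \<times> 'a) vec" where "h \<noteq> 0" and h_orth: "\<And>y. y \<in> span S \<Longrightarrow> orthogonal h y"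
    by (rule orthogonal_to_subspace_exists) blast
  have "c \<in> span S" if "\<forall>i\<in>E. c $ i = x (snd i) + y (fst i)" for c x y
  proof -
    define r where "r i = c $ i - (x (snd i) + y (fst i))" for i
    have "c $ (k, \<beta>) = ((\<Sum>\<alpha>\<in>UNIV. (x \<alpha> + y k0) *\<^sub>R node \<alpha>)
        + (\<Sum>k\<in>UNIV - {k0}. (y k - y k0) *\<^sub>R user k) + (\<Sum>i\<in>UNIV - E. r i *\<^sub>R axis i 1)) $ (k, \<beta>)"
      for k \<beta>
    proof -
      have "(\<Sum>\<alpha>\<in>UNIV. (x \<alpha> + y k0) *\<^sub>R node \<alpha>) $ (k, \<beta>) = x \<beta> + y k0"
        by (simp add: node_def if_distrib cong: if_cong)
      moreover have "(\<Sum>k'\<in>UNIV - {k0}. (y k' - y k0) *\<^sub>R user k') $ (k, \<beta>) =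
          (if k = k0 then 0 else y k - y k0)"
        by (simp add: user_def if_distrib cong: if_cong)
      moreover have "(\<Sum>i\<in>UNIV - E. r i *\<^sub>R axis i (1::real)) $ (k, \<beta>) =
          (if (k, \<beta>) \<in> E then 0 else r (k, \<beta>))"
        by (simp add: axis_def if_distrib cong: if_cong)
      ultimately show ?thesis using that by (auto simp: r_def)
    qed
    then have "c = (\<Sum>\<alpha>\<in>UNIV. (x \<alpha> + y k0) *\<^sub>R node \<alpha>) + (\<Sum>k\<in>UNIV - {k0}. (y k - y k0) *\<^sub>R user k)
              + (\<Sum>i\<in>UNIV - E. r i *\<^sub>R axis i 1)"
      by (simp add: vec_eq_iff split_paired_all)
    also have "\<dots> \<in> span S"
      by (intro span_add span_sum span_scale span_base) (auto simp: S_def)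
    finally show ?thesis .
  qed
  then show ?thesis
    using \<open>h \<noteq> 0\<close> h_orth unfolding separable_on_def orthogonal_def by blast
qed

section \<open>Null level sets of log-linear functions\<close>

text \<open>By Fubini in the coordinate j, the level set meets each line parallel to the j-th axis
  in at most one point, and points are null.\<close>

lemma AE_log_linear_neq_0:
  fixes h :: "'i::finite \<Rightarrow> real" and \<mu> :: "real measure"
  assumes prob: "prob_space \<mu>" and borel: "sets \<mu> = sets borel"
    and nonatomic: "\<And>x. emeasure \<mu> {x} = 0" and "h j \<noteq> 0"
  shows "AE g in PiM UNIV (\<lambda>_::'i. \<mu>). (\<forall>i. g i > 0) \<longrightarrow> (\<Sum>i\<in>UNIV. h i * ln (g i)) \<noteq> 0"
proof -
  define M where "M = PiM UNIV (\<lambda>_::'i. \<mu>)"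
  define N where "N = {g \<in> space M. (\<forall>i. g i > 0) \<and> (\<Sum>i\<in>UNIV. h i * ln (g i)) = 0}"
  have [measurable]: "(\<lambda>g. g i) \<in> borel_measurable M" for i
    unfolding M_def
    by (subst measurable_cong_sets[OF refl borel[symmetric]]) (rule measurable_component_singleton, simp)
  have N_sets: "N \<in> sets M" unfolding N_def by measurable
  interpret product_sigma_finite "\<lambda>_::'i. \<mu>"
    unfolding product_sigma_finite_def
    using prob by (simp add: prob_space_imp_subprob_space subprob_space_imp_sigma_finite)
  define I where "I = UNIV - {j}"
  have M_insert: "M = PiM (insert j I) (\<lambda>_. \<mu>)" unfolding M_def I_def by simp
  define root where "root x = exp (- (\<Sum>i\<in>I. h i * ln (x i)) / h j)" for x :: "'i \<Rightarrow> real"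
  have line: "indicator N (x(j := y)) \<le> (indicator {root x} y :: ennreal)" for x y
  proof (cases "x(j := y) \<in> N")
    case True
    then have "y > 0" and "h j * ln y + (\<Sum>i\<in>I. h i * ln (x i)) = 0"
      unfolding N_def I_def by (auto simp: sum.remove[of _ j] elim!: allE[of _ j] intro!: sum.cong)
    then have "y = root x" unfolding root_def using \<open>h j \<noteq> 0\<close>
      by (metis exp_ln add_eq_0_iff2 nonzero_mult_div_cancel_left minus_divide_left)
    then show ?thesis using True by simp
  qed simp
  have "emeasure M N = (\<integral>\<^sup>+ g. indicator N g \<partial>M)" using N_sets by simp
  also have "\<dots> = (\<integral>\<^sup>+ x. (\<integral>\<^sup>+ y. indicator N (x(j := y)) \<partial>\<mu>) \<partial>PiM I (\<lambda>_. \<mu>))"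
    using N_sets unfolding M_insert
    by (intro product_nn_integral_insert) (auto simp: I_def)
  also have "\<dots> \<le> (\<integral>\<^sup>+ x. emeasure \<mu> {root x} \<partial>PiM I (\<lambda>_. \<mu>))"
    using borel by (intro nn_integral_mono order_trans[OF nn_integral_mono[OF line]]) simp
  finally have "emeasure M N = 0" using nonatomic by simp
  then have "N \<in> null_sets M" using N_sets by (rule null_setsI)
  then have "AE g in M. g \<notin> N" by (rule AE_not_in)
  then show ?thesis unfolding M_def N_def by (auto elim: AE_mp)
qed

section \<open>First-order conditions at a Nash equilibrium\<close>

definition marginal_rate ::
  "('a::finite \<Rightarrow> real) \<Rightarrow> ('a \<Rightarrow> real) \<Rightarrow> ('k::finite \<times> 'a \<Rightarrow> real) \<Rightarrow> (real, 'k \<times> 'a) vec \<Rightarrow> 'k \<Rightarrow> 'a \<Rightarrow> real"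
  where "marginal_rate b \<sigma>2 g p k \<alpha> = b \<alpha> * g (k, \<alpha>) / (\<sigma>2 \<alpha> + (\<Sum>l\<in>UNIV. g (l, \<alpha>) * p $ (l, \<alpha>)))"

lemma has_real_derivative_payoff_deviate:
  fixes p :: "(real, 'k::finite \<times> 'a::finite) vec"
  assumes g_pos: "\<And>i. g i > 0" and \<sigma>2_pos: "\<And>\<alpha>. \<sigma>2 \<alpha> > 0" and p_nonneg: "\<And>i. p $ i \<ge> 0"
  shows "((\<lambda>t. payoff b \<sigma>2 g k (deviate p k (\<lambda>\<gamma>. p $ (k, \<gamma>) + t * e \<gamma>))) has_real_derivative
           (\<Sum>\<gamma>\<in>UNIV. e \<gamma> * marginal_rate b \<sigma>2 g p k \<gamma>)) (at 0)"
proof -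
  define I where "I \<gamma> = \<sigma>2 \<gamma> + (\<Sum>l\<in>UNIV - {k}. g (l, \<gamma>) * p $ (l, \<gamma>))" for \<gamma>
  have gp_nonneg: "g (l, \<gamma>) * p $ (l, \<gamma>) \<ge> 0" for l \<gamma>
    using g_pos p_nonneg by (simp add: less_imp_le)
  have I_pos: "I \<gamma> > 0" for \<gamma>
  proof -
    have "(\<Sum>l\<in>UNIV - {k}. g (l, \<gamma>) * p $ (l, \<gamma>)) \<ge> 0" by (intro sum_nonneg gp_nonneg)
    then show ?thesis using \<sigma>2_pos[of \<gamma>] unfolding I_def by linarith
  qed
  have total: "\<sigma>2 \<gamma> + (\<Sum>l\<in>UNIV. g (l, \<gamma>) * p $ (l, \<gamma>)) = I \<gamma> + g (k, \<gamma>) * p $ (k, \<gamma>)" for \<gamma>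
    unfolding I_def by (subst sum.remove[of _ k]) auto
  have "((\<lambda>t. b \<gamma> * ln (1 + g (k, \<gamma>) * (p $ (k, \<gamma>) + t * e \<gamma>) / I \<gamma>)) has_real_derivative
          e \<gamma> * marginal_rate b \<sigma>2 g p k \<gamma>) (at 0)" for \<gamma>
  proof -
    have "1 + g (k, \<gamma>) * p $ (k, \<gamma>) / I \<gamma> > 0"
      using gp_nonneg I_pos[of \<gamma>] by (simp add: add_pos_nonneg)
    then have "((\<lambda>t. b \<gamma> * ln (1 + g (k, \<gamma>) * (p $ (k, \<gamma>) + t * e \<gamma>) / I \<gamma>)) has_real_derivative
        b \<gamma> * ((g (k, \<gamma>) * e \<gamma> / I \<gamma>) / (1 + g (k, \<gamma>) * (p $ (k, \<gamma>) + 0 * e \<gamma>) / I \<gamma>))) (at 0)"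
      using I_pos[of \<gamma>] by (auto intro!: derivative_eq_intros simp: ac_simps)
    moreover have "b \<gamma> * ((g (k, \<gamma>) * e \<gamma> / I \<gamma>) / (1 + g (k, \<gamma>) * (p $ (k, \<gamma>) + 0 * e \<gamma>) / I \<gamma>))
        = e \<gamma> * marginal_rate b \<sigma>2 g p k \<gamma>"
      unfolding marginal_rate_def total using I_pos[of \<gamma>] gp_nonneg[of k \<gamma>] by (simp add: field_simps)
    ultimately show ?thesis by simp
  qed
  then have "((\<lambda>t. \<Sum>\<gamma>\<in>UNIV. b \<gamma> * ln (1 + g (k, \<gamma>) * (p $ (k, \<gamma>) + t * e \<gamma>) / I \<gamma>)) has_real_derivative
      (\<Sum>\<gamma>\<in>UNIV. e \<gamma> * marginal_rate b \<sigma>2 g p k \<gamma>)) (at 0)"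
    by (rule DERIV_sum)
  moreover have "payoff b \<sigma>2 g k (deviate p k (\<lambda>\<gamma>. p $ (k, \<gamma>) + t * e \<gamma>)) =
      (\<Sum>\<gamma>\<in>UNIV. b \<gamma> * ln (1 + g (k, \<gamma>) * (p $ (k, \<gamma>) + t * e \<gamma>) / I \<gamma>))" for t
    unfolding payoff_def deviate_def I_def by (intro sum.cong) auto
  ultimately show ?thesis by simp
qed

text \<open>Shifting a little power from a used node \<alpha> to a node \<beta> with a higher marginal rate
  would strictly increase the payoff.\<close>

lemma nash_equilibrium_marginal_rate_le:
  fixes p :: "(real, 'k::finite \<times> 'a::finite) vec"
  assumes NE: "nash_equilibrium P b \<sigma>2 g p"
    and g_pos: "\<And>i. g i > 0" and \<sigma>2_pos: "\<And>\<alpha>. \<sigma>2 \<alpha> > 0" and used: "p $ (k, \<alpha>) > 0"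
  shows "marginal_rate b \<sigma>2 g p k \<beta> \<le> marginal_rate b \<sigma>2 g p k \<alpha>"
proof (rule ccontr)
  assume less: "\<not> ?thesis"
  then have "\<alpha> \<noteq> \<beta>" by auto
  have pP: "p \<in> profiles P"
    and best: "\<And>q. q \<in> strategy_set P k \<Longrightarrow> payoff b \<sigma>2 g k (deviate p k q) \<le> payoff b \<sigma>2 g k p"
    using NE unfolding nash_equilibrium_def by auto
  have p_nonneg: "\<And>i. p $ i \<ge> 0" using pP unfolding profiles_def by auto
  define e where "e \<gamma> = (if \<gamma> = \<beta> then 1 else if \<gamma> = \<alpha> then -1 else 0 :: real)" for \<gamma>
  have sum_e: "(\<Sum>\<gamma>\<in>UNIV. e \<gamma> * c \<gamma>) = c \<beta> - c \<alpha>" for c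
  proof -
    have "(\<Sum>\<gamma>\<in>UNIV. e \<gamma> * c \<gamma>) = (\<Sum>\<gamma>\<in>UNIV. (if \<gamma> = \<beta> then c \<beta> else 0) - (if \<gamma> = \<alpha> then c \<alpha> else 0))"
      by (rule sum.cong) (auto simp: e_def \<open>\<alpha> \<noteq> \<beta>\<close>)
    then show ?thesis by (simp add: sum_subtractf)
  qed
  define q where "q t \<gamma> = p $ (k, \<gamma>) + t * e \<gamma>" for t \<gamma>
  define f where "f t = payoff b \<sigma>2 g k (deviate p k (q t))" for t
  have "(f has_real_derivative marginal_rate b \<sigma>2 g p k \<beta> - marginal_rate b \<sigma>2 g p k \<alpha>) (at 0)"
    using has_real_derivative_payoff_deviate[OF g_pos \<sigma>2_pos p_nonneg, where b=b and k=k and e=e]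
    unfolding f_def q_def sum_e .
  moreover have "marginal_rate b \<sigma>2 g p k \<beta> - marginal_rate b \<sigma>2 g p k \<alpha> > 0" using less by simp
  ultimately obtain d where "d > 0" and increase: "\<And>h. h > 0 \<Longrightarrow> h < d \<Longrightarrow> f 0 < f (0 + h)"
    using DERIV_pos_inc_right by blast
  define t where "t = min (d / 2) (p $ (k, \<alpha>))"
  have t: "t > 0" "t < d" "t \<le> p $ (k, \<alpha>)" using \<open>d > 0\<close> used unfolding t_def by auto
  have "q t \<in> strategy_set P k"
  proof -
    have "(\<Sum>\<gamma>\<in>UNIV. q t \<gamma>) = (\<Sum>\<gamma>\<in>UNIV. p $ (k, \<gamma>)) + (\<Sum>\<gamma>\<in>UNIV. e \<gamma> * t)"
      unfolding q_def by (simp add: sum.distrib mult.commute)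
    then have "(\<Sum>\<gamma>\<in>UNIV. q t \<gamma>) = P k" using pP sum_e[of "\<lambda>_. t"] unfolding profiles_def by simp
    moreover have "q t \<gamma> \<ge> 0" for \<gamma> using t p_nonneg[of "(k, \<gamma>)"] unfolding q_def e_def by auto
    ultimately show ?thesis unfolding strategy_set_def by auto
  qed
  moreover have "deviate p k (q 0) = p" unfolding deviate_def q_def by (auto simp: vec_eq_iff)
  ultimately have "f t \<le> f 0" using best unfolding f_def by simp
  with increase[OF t(1,2)] show False by simp
qed

lemma nash_equilibrium_log_gain_separable:
  fixes p :: "(real, 'k::finite \<times> 'a::finite) vec"
  assumes NE: "nash_equilibrium P b \<sigma>2 g p" and P_pos: "\<And>k. P k > 0"
    and g_pos: "\<And>i. g i > 0" and \<sigma>2_pos: "\<And>\<alpha>. \<sigma>2 \<alpha> > 0" and b_pos: "\<And>\<alpha>. b \<alpha> > 0"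
  shows "separable_on {i. p $ i > 0} (\<chi> i. ln (g i))"
proof -
  have pP: "p \<in> profiles P" using NE unfolding nash_equilibrium_def by auto
  define W where "W \<gamma> = \<sigma>2 \<gamma> + (\<Sum>l\<in>UNIV. g (l, \<gamma>) * p $ (l, \<gamma>))" for \<gamma>
  have W_pos: "W \<gamma> > 0" for \<gamma>
  proof -
    have "(\<Sum>l\<in>UNIV. g (l, \<gamma>) * p $ (l, \<gamma>)) \<ge> 0"
      using pP g_pos unfolding profiles_def by (intro sum_nonneg) (simp add: less_imp_le)
    then show ?thesis using \<sigma>2_pos[of \<gamma>] unfolding W_def by linarith
  qed
  define pivot where "pivot k = (SOME \<alpha>. p $ (k, \<alpha>) > 0)" for k
  have pivot: "p $ (k, pivot k) > 0" for k
    unfolding pivot_def by (rule someI_ex) (rule profiles_row_pos[OF pP P_pos])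
  have "ln (g (k, \<alpha>)) = (ln (W \<alpha>) - ln (b \<alpha>)) + ln (marginal_rate b \<sigma>2 g p k (pivot k))"
    if "p $ (k, \<alpha>) > 0" for k \<alpha>
  proof -
    have "marginal_rate b \<sigma>2 g p k (pivot k) = marginal_rate b \<sigma>2 g p k \<alpha>"
      using nash_equilibrium_marginal_rate_le[OF NE g_pos \<sigma>2_pos that]
        nash_equilibrium_marginal_rate_le[OF NE g_pos \<sigma>2_pos pivot] by (rule order.antisym)
    then have "marginal_rate b \<sigma>2 g p k (pivot k) = b \<alpha> * g (k, \<alpha>) / W \<alpha>"
      unfolding marginal_rate_def W_def .
    then show ?thesis
      using W_pos[of \<alpha>] g_pos[of "(k, \<alpha>)"] b_pos[of \<alpha>] by (simp add: ln_mult ln_div)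
  qed
  then show ?thesis unfolding separable_on_def by fastforce
qed

theorem corollary2:
  fixes P :: "'k::finite \<Rightarrow> real" and b \<sigma>2 :: "'a::finite \<Rightarrow> real"
    and \<mu> :: "real measure"
  assumes P_pos: "\<And>k. P k > 0"
    and b_pos: "\<And>\<alpha>. b \<alpha> > 0"
    and \<sigma>2_pos: "\<And>\<alpha>. \<sigma>2 \<alpha> > 0"
    and prob: "prob_space \<mu>"
    and borel: "sets \<mu> = sets borel"
    and positive: "AE x in \<mu>. x > 0"
    and nonatomic: "\<And>x. emeasure \<mu> {x} = 0"
  shows "AE g in (PiM UNIV (\<lambda>_::'k \<times> 'a. \<mu>)).
           \<forall>p. nash_equilibrium P b \<sigma>2 g p \<longrightarrow>
             (\<exists>F. F face_of profiles P \<and> p \<in> rel_interior F \<and> aff_dim F \<le> int CARD('a) - 1)"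
proof -
  define large where "large = {E :: ('k \<times> 'a) set. card E \<ge> CARD('a) + CARD('k)}"
  have "\<forall>E\<in>large. \<exists>h. h \<noteq> 0 \<and> (\<forall>c. separable_on E c \<longrightarrow> h \<bullet> c = 0)"
    unfolding large_def using exists_orthogonal_separable_on by blast
  then obtain h where h: "\<forall>E\<in>large. h E \<noteq> 0 \<and> (\<forall>c. separable_on E c \<longrightarrow> h E \<bullet> c = 0)"
    by (rule bchoice[elim_format]) blast
  have "AE g in PiM UNIV (\<lambda>_::'k \<times> 'a. \<mu>). \<forall>i\<in>UNIV. g i > 0"
    by (intro AE_finite_allI AE_PiM_component prob positive) auto
  moreover have "AE g in PiM UNIV (\<lambda>_::'k \<times> 'a. \<mu>).
      \<forall>E\<in>large. (\<forall>i. g i > 0) \<longrightarrow> (\<Sum>i\<in>UNIV. h E $ i * ln (g i)) \<noteq> 0"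
  proof (intro AE_finite_allI)
    fix E assume "E \<in> large"
    then obtain j where "h E $ j \<noteq> 0" using h by (auto simp: vec_eq_iff)
    then show "AE g in PiM UNIV (\<lambda>_. \<mu>). (\<forall>i. g i > 0) \<longrightarrow> (\<Sum>i\<in>UNIV. h E $ i * ln (g i)) \<noteq> 0"
      by (rule AE_log_linear_neq_0[OF prob borel nonatomic])
  qed simp
  ultimately show ?thesis
  proof eventually_elim
    case (elim g)
    show ?case
    proof (intro allI impI)
      fix p assume NE: "nash_equilibrium P b \<sigma>2 g p"
      then have "separable_on {i. p $ i > 0} (\<chi> i. ln (g i))"
        using nash_equilibrium_log_gain_separable[OF NE P_pos _ \<sigma>2_pos b_pos] elim(1) by blast
      then have "{i. p $ i > 0} \<notin> large" using h elim by (fastforce simp: inner_vec_def)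
      then have "int (card {i. p $ i > 0}) - int CARD('k) \<le> int CARD('a) - 1"
        unfolding large_def by simp
      moreover have pP: "p \<in> profiles P" using NE unfolding nash_equilibrium_def by simp
      ultimately show "\<exists>F. F face_of profiles P \<and> p \<in> rel_interior F \<and> aff_dim F \<le> int CARD('a) - 1"
        using support_face_face_of mem_rel_interior_support_face[OF pP]
          aff_dim_support_face_le[OF pP P_pos] by fastforce
    qed
  qed
qed

end
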